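(* Let $(\mathcal T,\otimes)$ be an $M$-compatible tensor triangulated category and let $\mathscr E$ be a split generator of $\mathcal T$. Let $\tau_{\mathscr E}=-\otimes\mathscr E$ (a triangulated endofunctor of $\mathcal T$). Then $\mathrm{Spc}_\otimes\mathcal T=\mathrm{Spc}^{\tau_{\mathscr E}}\mathcal T\subset\mathrm{Spc}_\triangle\mathcal T$.
   Context: All categories and functors are $k$-linear; triangulated categories are essentially small. For a triangulated category $\mathcal T$, $\mathrm{Th}(\mathcal T)$ is the set of thick subcategories (triangulated full subcategories closed under direct summands) with the Balmer topology (closed sets $V(\mathcal E)=\{\mathcal I:\mathcal I\cap\mathcal E=\emptyset\}$); $\mathscr E$ is a split generator if the smallest thick subcategory containing $\mathscr E$ is $\mathcal T$. A thick subcategory $\mathcal P$ is prime if the thick subcategories strictly containing it have a smallest element; $\mathrm{Spc}_\triangle\mathcal T$ is the subspace of prime thick subcategories. For a triangulated endofunctor $\tau$, $\tau^{-1}(\mathcal P)=\{M:\tau(M)\in\mathcal P\}$ and $\mathrm{Spc}^\tau\mathcal T=\{\mathcal P\in\mathrm{Spc}_\triangle\mathcal T:\tau^{-1}(\mathcal P)=\mathcal P\}$. In a tt-category $(\mathcal T,\otimes)$: a $\otimes$-ideal is a thick $\mathcal I$ with $M\otimes N\in\mathcal I$ for all $M\in\mathcal T,N\in\mathcal I$; a prime $\otimes$-ideal is a $\otimes$-ideal $\mathcal P\neq\mathcal T$ with $M\otimes N\in\mathcal P\Rightarrow M\in\mathcal P$ or $N\in\mathcal P$; $\mathrm{Spc}_\otimes\mathcal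 T$ is the subspace of prime $\otimes$-ideals. $(\mathcal T,\otimes)$ is $M$-compatible if a thick subcategory is a prime $\otimes$-ideal if and only if it is a prime thick subcategory that is a $\otimes$-ideal. *)

theory Defs
  imports Main
begin

text \<open>
  Object-level model of a (tensor) triangulated category.
  The data record:
   - tiso X Y    : X and Y are isomorphic,
   - tzero       : a zero object,
   - tshift, tshift_inv : the suspension functor and a quasi-inverse (on objects),
   - tsum X Y    : the direct sum (biproduct),
   - tdist X Y Z : there is a distinguished triangle X \<rightarrow> Y \<rightarrow> Z \<rightarrow> \<Sigma> X.
  Thick subcategories, primes, tensor ideals etc. are all determined by these data
  (full subcategories are identified with their sets of objects).
\<close>

record 'o tri_cat =
  tiso :: "'o \<Rightarrow> 'o \<Rightarrow> bool"
  tzero :: 'o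
  tshift :: "'o \<Rightarrow> 'o"
  tshift_inv :: "'o \<Rightarrow> 'o"
  tsum :: "'o \<Rightarrow> 'o \<Rightarrow> 'o"
  tdist :: "'o \<Rightarrow> 'o \<Rightarrow> 'o \<Rightarrow> bool"

record 'o tt_cat = "'o tri_cat" +
  ttensor :: "'o \<Rightarrow> 'o \<Rightarrow> 'o"
  tunit :: 'o

text \<open>Object-level shadow of the axioms of a triangulated category.\<close>
definition triangulated :: "('o, 'z) tri_cat_scheme \<Rightarrow> bool" where
  "triangulated T \<longleftrightarrow>
     equivp (tiso T)
   \<and> (\<forall>X Y. tiso T X Y \<longrightarrow> tiso T (tshift T X) (tshift T Y))
   \<and> (\<forall>X Y. tiso T X Y \<longrightarrow> tiso T (tshift_inv T X) (tshift_inv T Y))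
   \<and> (\<forall>X. tiso T (tshift T (tshift_inv T X)) X \<and> tiso T (tshift_inv T (tshift T X)) X)
   \<and> tiso T (tshift T (tzero T)) (tzero T)
   \<and> (\<forall>X X' Y Y'. tiso T X X' \<longrightarrow> tiso T Y Y' \<longrightarrow> tiso T (tsum T X Y) (tsum T X' Y'))
   \<and> (\<forall>X Y. tiso T (tsum T X Y) (tsum T Y X))
   \<and> (\<forall>X. tiso T (tsum T X (tzero T)) X)
   \<and> (\<forall>X Y Z X' Y' Z'. tdist T X Y Z \<longrightarrow> tiso T X X' \<longrightarrow> tiso T Y Y' \<longrightarrow> tiso T Z Z'
        \<longrightarrow> tdist T X' Y' Z')
   \<and> (\<forall>X. tdist T X X (tzero T))
   \<and> (\<forall>X Y. tdist T X (tsum T X Y) Y)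
   \<and> (\<forall>X Y. \<exists>Z. tdist T X Y Z)
   \<and> (\<forall>X Y Z. tdist T X Y Z \<longleftrightarrow> tdist T Y Z (tshift T X))"

definition triangulated_functor :: "('o, 'z) tri_cat_scheme \<Rightarrow> ('o \<Rightarrow> 'o) \<Rightarrow> bool" where
  "triangulated_functor T F \<longleftrightarrow>
     (\<forall>X Y. tiso T X Y \<longrightarrow> tiso T (F X) (F Y))
   \<and> (\<forall>X Y Z. tdist T X Y Z \<longrightarrow> tdist T (F X) (F Y) (F Z))
   \<and> (\<forall>X. tiso T (F (tshift T X)) (tshift T (F X)))
   \<and> tiso T (F (tzero T)) (tzero T)
   \<and> (\<forall>X Y. tiso T (F (tsum T X Y)) (tsum T (F X) (F Y)))"

definition tt_category :: "('o, 'z) tt_cat_scheme \<Rightarrow> bool" where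
  "tt_category T \<longleftrightarrow>
     triangulated T
   \<and> (\<forall>M. triangulated_functor T (\<lambda>X. ttensor T M X))
   \<and> (\<forall>M. triangulated_functor T (\<lambda>X. ttensor T X M))
   \<and> (\<forall>X Y. tiso T (ttensor T X Y) (ttensor T Y X))
   \<and> (\<forall>X Y Z. tiso T (ttensor T (ttensor T X Y) Z) (ttensor T X (ttensor T Y Z)))
   \<and> (\<forall>X. tiso T (ttensor T (tunit T) X) X)"

definition thick :: "('o, 'z) tri_cat_scheme \<Rightarrow> 'o set \<Rightarrow> bool" where
  "thick T I \<longleftrightarrow>
     tzero T \<in> I
   \<and> (\<forall>X Y. tiso T X Y \<longrightarrow> X \<in> I \<longrightarrow> Y \<in> I)
   \<and> (\<forall>X. X \<in> I \<longrightarrow> tshift T X \<in> I)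
   \<and> (\<forall>X. X \<in> I \<longrightarrow> tshift_inv T X \<in> I)
   \<and> (\<forall>X Y Z. tdist T X Y Z \<longrightarrow> X \<in> I \<longrightarrow> Y \<in> I \<longrightarrow> Z \<in> I)
   \<and> (\<forall>X Y Z. tdist T X Y Z \<longrightarrow> Y \<in> I \<longrightarrow> Z \<in> I \<longrightarrow> X \<in> I)
   \<and> (\<forall>X Y Z. tdist T X Y Z \<longrightarrow> X \<in> I \<longrightarrow> Z \<in> I \<longrightarrow> Y \<in> I)
   \<and> (\<forall>X Y. tsum T X Y \<in> I \<longrightarrow> X \<in> I)"

definition thick_closure :: "('o, 'z) tri_cat_scheme \<Rightarrow> 'o set \<Rightarrow> 'o set" where
  "thick_closure T S = \<Inter>{I. thick T I \<and> S \<subseteq> I}"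

definition split_generator :: "('o, 'z) tri_cat_scheme \<Rightarrow> 'o \<Rightarrow> bool" where
  "split_generator T E \<longleftrightarrow> thick_closure T {E} = UNIV"

definition prime_thick :: "('o, 'z) tri_cat_scheme \<Rightarrow> 'o set \<Rightarrow> bool" where
  "prime_thick T P \<longleftrightarrow> thick T P \<and>
     (\<exists>Q. thick T Q \<and> P \<subset> Q \<and> (\<forall>Q'. thick T Q' \<and> P \<subset> Q' \<longrightarrow> Q \<subseteq> Q'))"

definition Spc_tri :: "('o, 'z) tri_cat_scheme \<Rightarrow> 'o set set" where
  "Spc_tri T = {P. prime_thick T P}"

definition Spc_fix :: "('o, 'z) tri_cat_scheme \<Rightarrow> ('o \<Rightarrow> 'o) \<Rightarrow> 'o set set" where
  "Spc_fix T \<tau> = {P \<in> Spc_tri T. \<tau> -` P = P}"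

definition tensor_ideal :: "('o, 'z) tt_cat_scheme \<Rightarrow> 'o set \<Rightarrow> bool" where
  "tensor_ideal T I \<longleftrightarrow> thick T I \<and> (\<forall>M N. N \<in> I \<longrightarrow> ttensor T M N \<in> I)"

definition prime_tensor_ideal :: "('o, 'z) tt_cat_scheme \<Rightarrow> 'o set \<Rightarrow> bool" where
  "prime_tensor_ideal T P \<longleftrightarrow> tensor_ideal T P \<and> P \<noteq> UNIV
     \<and> (\<forall>M N. ttensor T M N \<in> P \<longrightarrow> M \<in> P \<or> N \<in> P)"

definition Spc_tensor :: "('o, 'z) tt_cat_scheme \<Rightarrow> 'o set set" where
  "Spc_tensor T = {P. prime_tensor_ideal T P}"

definition M_compatible :: "('o, 'z) tt_cat_scheme \<Rightarrow> bool" where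
  "M_compatible T \<longleftrightarrow>
     (\<forall>I. thick T I \<longrightarrow> (prime_tensor_ideal T I \<longleftrightarrow> prime_thick T I \<and> tensor_ideal T I))"

end

theory Submission
  imports Defs
begin

text \<open>
  A prime \<open>\<otimes>\<close>-ideal \<open>P\<close> is fixed by \<open>- \<otimes> E\<close>: if \<open>M \<otimes> E \<in> P\<close> then \<open>M \<in> P\<close>,
  because \<open>E \<in> P\<close> would force \<open>P\<close> to be everything. Conversely, if a prime thick
  subcategory \<open>P\<close> is fixed by \<open>- \<otimes> E\<close> and \<open>N \<in> P\<close>, then \<open>{X. X \<otimes> N \<in> P}\<close> is a thick
  subcategory containing the split generator \<open>E\<close>, hence everything, so \<open>P\<close> is a
  \<open>\<otimes>\<close>-ideal. \<open>M\<close>-compatibility then identifies the two kinds of primes.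
\<close>

lemma thick_iso_closed:
  assumes "thick T I" "tiso T X Y" "X \<in> I"
  shows "Y \<in> I"
  using assms unfolding thick_def by blast

lemma thick_vimage_triangulated_functor:
  assumes tri: "triangulated T" and F: "triangulated_functor T F" and P: "thick T P"
  shows "thick T (F -` P)"
proof -
  have iso_sym: "\<And>X Y. tiso T X Y \<Longrightarrow> tiso T Y X"
    using tri unfolding triangulated_def by (meson equivp_symp)
  have shift_shift_inv: "\<And>X. tiso T (tshift T (tshift_inv T X)) X"
    and shift_inv_shift: "\<And>X. tiso T (tshift_inv T (tshift T X)) X"
    using tri unfolding triangulated_def by simp_all
  note rep = thick_iso_closed[OF P]
  have F_iso: "\<And>X Y. tiso T X Y \<Longrightarrow> tiso T (F X) (F Y)"
    and F_dist: "\<And>X Y Z. tdist T X Y Z \<Longrightarrow> tdist T (F X) (F Y) (F Z)"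
    and F_shift: "\<And>X. tiso T (F (tshift T X)) (tshift T (F X))"
    and F_zero: "tiso T (F (tzero T)) (tzero T)"
    and F_sum: "\<And>X Y. tiso T (F (tsum T X Y)) (tsum T (F X) (F Y))"
    using F unfolding triangulated_functor_def by blast+
  have P_zero: "tzero T \<in> P"
    and P_shift: "\<And>X. X \<in> P \<Longrightarrow> tshift T X \<in> P"
    and P_sum: "\<And>X Y. tsum T X Y \<in> P \<Longrightarrow> X \<in> P"
    and P_dist1: "\<And>X Y Z. tdist T X Y Z \<Longrightarrow> X \<in> P \<Longrightarrow> Y \<in> P \<Longrightarrow> Z \<in> P"
    and P_dist2: "\<And>X Y Z. tdist T X Y Z \<Longrightarrow> Y \<in> P \<Longrightarrow> Z \<in> P \<Longrightarrow> X \<in> P"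
    and P_dist3: "\<And>X Y Z. tdist T X Y Z \<Longrightarrow> X \<in> P \<Longrightarrow> Z \<in> P \<Longrightarrow> Y \<in> P"
    using P unfolding thick_def by blast+
  have shift_inv: "tshift_inv T X \<in> F -` P" if "F X \<in> P" for X
  proof -
    have "F (tshift T (tshift_inv T X)) \<in> P"
      using rep[OF iso_sym[OF F_iso[OF shift_shift_inv]] that] .
    then have "tshift T (F (tshift_inv T X)) \<in> P" using rep[OF F_shift] by blast
    then have "tshift_inv T (tshift T (F (tshift_inv T X))) \<in> P"
      using P unfolding thick_def by blast
    then show ?thesis using rep[OF shift_inv_shift] by simp
  qed
  show ?thesis
    unfolding thick_def
  proof (intro conjI allI impI)
    show "tzero T \<in> F -` P" using rep[OF iso_sym[OF F_zero] P_zero] by simp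
  next
    fix X Y assume "tiso T X Y" "X \<in> F -` P"
    then show "Y \<in> F -` P" using rep F_iso by blast
  next
    fix X assume "X \<in> F -` P"
    then show "tshift T X \<in> F -` P" using rep[OF iso_sym[OF F_shift]] P_shift by simp
  next
    fix X assume "X \<in> F -` P"
    then show "tshift_inv T X \<in> F -` P" using shift_inv by simp
  next
    fix X Y Z assume "tdist T X Y Z" "X \<in> F -` P" "Y \<in> F -` P"
    then show "Z \<in> F -` P" using P_dist1 F_dist by blast
  next
    fix X Y Z assume "tdist T X Y Z" "Y \<in> F -` P" "Z \<in> F -` P"
    then show "X \<in> F -` P" using P_dist2 F_dist by blast
  next
    fix X Y Z assume "tdist T X Y Z" "X \<in> F -` P" "Z \<in> F -` P"
    then show "Y \<in> F -` P" using P_dist3 F_dist by blast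
  next
    fix X Y assume "tsum T X Y \<in> F -` P"
    then show "X \<in> F -` P" using rep[OF F_sum] P_sum by blast
  qed
qed

lemma split_generator_thick_eq_UNIV:
  assumes "split_generator T E" "thick T I" "E \<in> I"
  shows "I = UNIV"
  using assms unfolding split_generator_def thick_closure_def by blast

lemma tensor_ideal_tensor_right:
  assumes "tt_category T" "tensor_ideal T I" "N \<in> I"
  shows "ttensor T N M \<in> I"
proof -
  have "thick T I" using assms(2) unfolding tensor_ideal_def by blast
  moreover have "tiso T (ttensor T M N) (ttensor T N M)"
    using assms(1) unfolding tt_category_def by blast
  moreover have "ttensor T M N \<in> I" using assms(2,3) unfolding tensor_ideal_def by blast
  ultimately show ?thesis by (rule thick_iso_closed)
qed

lemma prime_tensor_ideal_vimage_tensor_split_generator: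
  assumes tt: "tt_category T" and gen: "split_generator T E" and P: "prime_tensor_ideal T P"
  shows "(\<lambda>M. ttensor T M E) -` P = P"
proof (intro set_eqI iffI)
  have "thick T P" and "P \<noteq> UNIV"
    using P unfolding prime_tensor_ideal_def tensor_ideal_def by blast+
  then have "E \<notin> P" using split_generator_thick_eq_UNIV[OF gen] by blast
  moreover fix M assume "M \<in> (\<lambda>M. ttensor T M E) -` P"
  ultimately show "M \<in> P" using P unfolding prime_tensor_ideal_def by auto
next
  fix M assume "M \<in> P"
  moreover have "tensor_ideal T P" using P unfolding prime_tensor_ideal_def by blast
  ultimately show "M \<in> (\<lambda>M. ttensor T M E) -` P"
    using tensor_ideal_tensor_right[OF tt] by simp
qed

lemma tensor_ideal_if_vimage_tensor_split_generator:
  assumes tt: "tt_category T" and gen: "split_generator T E" and P: "thick T P"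
    and fixed: "(\<lambda>M. ttensor T M E) -` P = P"
  shows "tensor_ideal T P"
  unfolding tensor_ideal_def
proof (intro conjI P allI impI)
  fix M N assume "N \<in> P"
  then have "ttensor T N E \<in> P" using fixed by blast
  moreover have "tiso T (ttensor T N E) (ttensor T E N)"
    using tt unfolding tt_category_def by blast
  ultimately have "E \<in> (\<lambda>X. ttensor T X N) -` P" using thick_iso_closed[OF P] by simp
  moreover have "thick T ((\<lambda>X. ttensor T X N) -` P)"
  proof (rule thick_vimage_triangulated_functor[OF _ _ P])
    show "triangulated T" "triangulated_functor T (\<lambda>X. ttensor T X N)"
      using tt unfolding tt_category_def by blast+
  qed
  ultimately have "(\<lambda>X. ttensor T X N) -` P = UNIV"
    using split_generator_thick_eq_UNIV[OF gen] by blast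
  then show "ttensor T M N \<in> P" by blast
qed

theorem mainTheorem6:
  fixes T :: "('o, 'z) tt_cat_scheme" and E :: 'o
  assumes "tt_category T"
    and "M_compatible T"
    and "split_generator T E"
  shows "Spc_tensor T = Spc_fix T (\<lambda>M. ttensor T M E) \<and> Spc_fix T (\<lambda>M. ttensor T M E) \<subseteq> Spc_tri T"
proof -
  have "prime_tensor_ideal T P \<longleftrightarrow> prime_thick T P \<and> (\<lambda>M. ttensor T M E) -` P = P" for P
  proof
    assume prime: "prime_tensor_ideal T P"
    then have "thick T P" unfolding prime_tensor_ideal_def tensor_ideal_def by blast
    then have "prime_thick T P" using prime assms(2) unfolding M_compatible_def by blast
    with prime show "prime_thick T P \<and> (\<lambda>M. ttensor T M E) -` P = P"
      using prime_tensor_ideal_vimage_tensor_split_generator[OF assms(1,3)] by blast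
  next
    assume fixed_prime: "prime_thick T P \<and> (\<lambda>M. ttensor T M E) -` P = P"
    then have "thick T P" unfolding prime_thick_def by blast
    with fixed_prime have "tensor_ideal T P"
      using tensor_ideal_if_vimage_tensor_split_generator[OF assms(1,3)] by blast
    with fixed_prime \<open>thick T P\<close> show "prime_tensor_ideal T P"
      using assms(2) unfolding M_compatible_def by blast
  qed
  then show ?thesis unfolding Spc_tensor_def Spc_fix_def Spc_tri_def by blast
qed

end
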